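(* Let $\mathcal C$ be a small strongly upper-triangular linear category. Then $\operatorname{HH}_0(\mathcal C)\cong\mathbb Z\operatorname{Ob}(\mathcal C)$, the free abelian group on $\operatorname{Ob}(\mathcal C)$, and $\operatorname{HH}_i(\mathcal C)=0$ for all $i>0$.
   Context: A small linear category $\mathcal C$ is upper-triangular if there is a partial order $\le$ on $\operatorname{Ob}(\mathcal C)$ such that $\mathcal C(x,y)\neq0$ implies $x\le y$; it is strongly upper-triangular if moreover $\mathcal C(x,x)\cong\mathbb Z$ (as rings) for every object $x$. $\operatorname{HH}_*(\mathcal C)$ denotes Hochschild–Mitchell homology: the homology of the complex $C_n=\bigoplus_{x_0,\dots,x_n}\mathcal C(x_n,x_0)\otimes\mathcal C(x_{n-1},x_n)\otimes\dots\otimes\mathcal C(x_0,x_1)$ with $d_n(f_n\otimes\dots\otimes f_0)=\sum_{i=0}^{n-1}(-1)^i f_n\otimes\dots\otimes f_{n-i}f_{n-i-1}\otimes\dots\otimes f_0+(-1)^n f_0f_n\otimes f_{n-1}\otimes\dots\otimes f_1$. *)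

theory Defs
  imports "HOL-Algebra.Free_Abelian_Groups" "HOL-Algebra.Elementary_Groups" "HOL-Algebra.IntRing"
begin

text \<open>A small linear category: a set of objects, for each pair of objects a hom-set
  (morphisms x to y) carrying an abelian group structure, composition
  lc_comp x y z g f = g o f (for f : x to y, g : y to z), and identities.\<close>

record ('o, 'm) lincat =
  lc_Ob :: "'o set"
  lc_Hom :: "'o \<Rightarrow> 'o \<Rightarrow> 'm set"
  lc_add :: "'o \<Rightarrow> 'o \<Rightarrow> 'm \<Rightarrow> 'm \<Rightarrow> 'm"
  lc_zero :: "'o \<Rightarrow> 'o \<Rightarrow> 'm"
  lc_comp :: "'o \<Rightarrow> 'o \<Rightarrow> 'o \<Rightarrow> 'm \<Rightarrow> 'm \<Rightarrow> 'm"
  lc_id :: "'o \<Rightarrow> 'm"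

definition hom_group :: "('o, 'm) lincat \<Rightarrow> 'o \<Rightarrow> 'o \<Rightarrow> 'm monoid" where
  "hom_group C x y = \<lparr>carrier = lc_Hom C x y, monoid.mult = lc_add C x y, one = lc_zero C x y\<rparr>"

definition linear_category :: "('o, 'm) lincat \<Rightarrow> bool" where
  "linear_category C \<longleftrightarrow>
    (\<forall>x\<in>lc_Ob C. \<forall>y\<in>lc_Ob C. comm_group (hom_group C x y)) \<and>
    (\<forall>x\<in>lc_Ob C. \<forall>y\<in>lc_Ob C. \<forall>z\<in>lc_Ob C. \<forall>f\<in>lc_Hom C x y. \<forall>g\<in>lc_Hom C y z.
        lc_comp C x y z g f \<in> lc_Hom C x z) \<and>
    (\<forall>x\<in>lc_Ob C. lc_id C x \<in> lc_Hom C x x) \<and>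
    (\<forall>x\<in>lc_Ob C. \<forall>y\<in>lc_Ob C. \<forall>f\<in>lc_Hom C x y.
        lc_comp C x y y (lc_id C y) f = f \<and> lc_comp C x x y f (lc_id C x) = f) \<and>
    (\<forall>w\<in>lc_Ob C. \<forall>x\<in>lc_Ob C. \<forall>y\<in>lc_Ob C. \<forall>z\<in>lc_Ob C.
       \<forall>f\<in>lc_Hom C w x. \<forall>g\<in>lc_Hom C x y. \<forall>h\<in>lc_Hom C y z.
        lc_comp C w y z h (lc_comp C w x y g f) = lc_comp C w x z (lc_comp C x y z h g) f) \<and>
    (\<forall>x\<in>lc_Ob C. \<forall>y\<in>lc_Ob C. \<forall>z\<in>lc_Ob C. \<forall>f\<in>lc_Hom C x y. \<forall>f'\<in>lc_Hom C x y.
       \<forall>g\<in>lc_Hom C y z. \<forall>g'\<in>lc_Hom C y z.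
        lc_comp C x y z (lc_add C y z g g') f = lc_add C x z (lc_comp C x y z g f) (lc_comp C x y z g' f) \<and>
        lc_comp C x y z g (lc_add C x y f f') = lc_add C x z (lc_comp C x y z g f) (lc_comp C x y z g f'))"

definition end_ring :: "('o, 'm) lincat \<Rightarrow> 'o \<Rightarrow> 'm ring" where
  "end_ring C x = \<lparr>carrier = lc_Hom C x x, monoid.mult = lc_comp C x x x, one = lc_id C x,
                   zero = lc_zero C x x, add = lc_add C x x\<rparr>"

definition upper_triangular :: "('o, 'm) lincat \<Rightarrow> bool" where
  "upper_triangular C \<longleftrightarrow>
    (\<exists>le. partial_order_on (lc_Ob C) le \<and>
       (\<forall>x\<in>lc_Ob C. \<forall>y\<in>lc_Ob C. lc_Hom C x y \<noteq> {lc_zero C x y} \<longrightarrow> (x, y) \<in> le))"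

definition strongly_upper_triangular :: "('o, 'm) lincat \<Rightarrow> bool" where
  "strongly_upper_triangular C \<longleftrightarrow>
    upper_triangular C \<and> (\<forall>x\<in>lc_Ob C. end_ring C x \<simeq> \<Z>)"

text \<open>A generator of C_n: objects xs = [x_0,...,x_n] and morphisms fs = [f_0,...,f_n]
  with f_i : x_i to x_(i+1) (indices mod n+1), i.e. f_n : x_n to x_0.  The chain
  group C_n is the free abelian group on these generators modulo multilinearity
  in each slot, i.e. the direct sum over (x_0,...,x_n) of the tensor products
  C(x_n,x_0) (x) C(x_(n-1),x_n) (x) ... (x) C(x_0,x_1).\<close>

definition chain_gens :: "('o, 'm) lincat \<Rightarrow> nat \<Rightarrow> ('o list \<times> 'm list) set" where
  "chain_gens C n = {(xs, fs). length xs = Suc n \<and> length fs = Suc n \<and> set xs \<subseteq> lc_Ob C \<and>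
      (\<forall>i\<le>n. fs ! i \<in> lc_Hom C (xs ! i) (xs ! (Suc i mod Suc n)))}"

definition chain_group :: "('o, 'm) lincat \<Rightarrow> nat \<Rightarrow> (('o list \<times> 'm list) \<Rightarrow>\<^sub>0 int) monoid" where
  "chain_group C n = free_Abelian_group (chain_gens C n)"

definition multilin_rels :: "('o, 'm) lincat \<Rightarrow> nat \<Rightarrow> (('o list \<times> 'm list) \<Rightarrow>\<^sub>0 int) set" where
  "multilin_rels C n = {frag_of (xs, fs[i := lc_add C (xs ! i) (xs ! (Suc i mod Suc n)) f g])
       - frag_of (xs, fs[i := f]) - frag_of (xs, fs[i := g]) | xs fs i f g.
       (xs, fs) \<in> chain_gens C n \<and> i \<le> n \<and>
       f \<in> lc_Hom C (xs ! i) (xs ! (Suc i mod Suc n)) \<and>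
       g \<in> lc_Hom C (xs ! i) (xs ! (Suc i mod Suc n))}"

definition tensor_rels :: "('o, 'm) lincat \<Rightarrow> nat \<Rightarrow> (('o list \<times> 'm list) \<Rightarrow>\<^sub>0 int) set" where
  "tensor_rels C n = generate (chain_group C n) (multilin_rels C n)"

text \<open>For 1 <= j <= n, face j composes
  f_j o f_(j-1) and deletes x_j; this is the term with index i = n - j of the
  differential, with sign (-1)^(n-j).  Face 0 is the cyclic term (f_0 f_n) with
  sign (-1)^n, deleting x_0.\<close>

definition face :: "('o, 'm) lincat \<Rightarrow> nat \<Rightarrow> nat \<Rightarrow> 'o list \<times> 'm list \<Rightarrow> 'o list \<times> 'm list" where
  "face C n j s = (case s of (xs, fs) \<Rightarrow>
     (if j = 0 then
        (tl xs, take (n - 1) (tl fs) @ [lc_comp C (xs ! n) (xs ! 0) (xs ! 1) (fs ! 0) (fs ! n)])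
      else
        (take j xs @ drop (Suc j) xs,
         take (j - 1) fs @ [lc_comp C (xs ! (j - 1)) (xs ! j) (xs ! (Suc j mod Suc n)) (fs ! j) (fs ! (j - 1))]
           @ drop (Suc j) fs)))"

definition bdry :: "('o, 'm) lincat \<Rightarrow> nat \<Rightarrow> (('o list \<times> 'm list) \<Rightarrow>\<^sub>0 int) \<Rightarrow> (('o list \<times> 'm list) \<Rightarrow>\<^sub>0 int)" where
  "bdry C n = frag_extend (\<lambda>s. \<Sum>j\<le>n. frag_cmul ((-1) ^ (n - j)) (frag_of (face C n j s)))"

text \<open>Cycles and boundaries, lifted to the free level: a cycle is a chain whose
  boundary vanishes modulo the tensor relations; boundaries include the tensor
  relations.  Hence HH_n = cycles / boundaries is the homology of the complex of
  tensor products.\<close>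

definition cycles :: "('o, 'm) lincat \<Rightarrow> nat \<Rightarrow> (('o list \<times> 'm list) \<Rightarrow>\<^sub>0 int) set" where
  "cycles C n = (if n = 0 then carrier (chain_group C 0)
      else {c \<in> carrier (chain_group C n). bdry C n c \<in> tensor_rels C (n - 1)})"

definition boundaries :: "('o, 'm) lincat \<Rightarrow> nat \<Rightarrow> (('o list \<times> 'm list) \<Rightarrow>\<^sub>0 int) set" where
  "boundaries C n = generate (chain_group C n)
      (bdry C (Suc n) ` carrier (chain_group C (Suc n)) \<union> tensor_rels C n)"

definition HH :: "('o, 'm) lincat \<Rightarrow> nat \<Rightarrow> (('o list \<times> 'm list) \<Rightarrow>\<^sub>0 int) set monoid" where
  "HH C n = subgroup_generated (chain_group C n) (cycles C n) Mod boundaries C n"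

end

theory Submission
  imports Defs
begin

text \<open>
  The proof rests on the trace map tr : C_n \<rightarrow> \<int>Ob.  Fix ring isomorphisms
  phi x : C(x,x) \<cong> \<int>.  A generator (x_0, ..., x_n; f_0, ..., f_n) is sent to
  (\<Prod>i phi x f_i) \<cdot> x if all x_i equal one object x (a loop at x), and to 0 otherwise.
  Let E_n : \<int>Ob \<rightarrow> C_n send x to the unit loop (x, ..., x; id, ..., id).  We show:
  (1) tr vanishes exactly on the tensor (multilinearity) relations: tr kills them since each
      phi x is additive; conversely c \<equiv> E_n(tr c), because a generator that is not a loop has
      a zero morphism (upper triangularity) and in a loop each slot f can be traded for
      phi x f copies of the identity;
  (2) tr \<circ> d_n = \<epsilon>_n \<cdot> tr and d_n \<circ> E_n = \<epsilon>_n \<cdot> E_(n-1), where \<epsilon>_n = alt_sum n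
      is 1 for n even and 0 for n odd, since all faces of a generator have the same trace.
  Then tr induces HH_0 \<cong> \<int>Ob, and in positive degrees every cycle is a boundary.
\<close>

lemma trivial_group_Mod_self:
  assumes "group H"
  shows "trivial_group (H Mod carrier H)"
proof -
  interpret group H by (rule assms)
  have "carrier (H Mod carrier H) = {carrier H}"
    unfolding FactGroup_def RCOSETS_def
    using subgroup.rcos_const[OF subgroup_self] one_closed by auto
  then show ?thesis
    unfolding trivial_group_def using normal.factorgroup_is_group[OF normal_self]
    by (simp add: FactGroup_def)
qed

lemma frag_cmul_diff_distrib2: "frag_cmul c (a - b) = frag_cmul c a - frag_cmul c b"
  by (rule poly_mapping_eqI) (simp add: lookup_minus algebra_simps)

lemma sum_frag_cmul_const:
  "finite J \<Longrightarrow> (\<Sum>j\<in>J. frag_cmul (k j) a) = frag_cmul (\<Sum>j\<in>J. k j) a"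
  by (induction J rule: finite_induct) (auto simp: frag_cmul_distrib)

lemma frag_extend_cmul_fun:
  "frag_extend (\<lambda>x. frag_cmul k (f x)) a = frag_cmul k (frag_extend f a)"
  unfolding frag_extend_def by (simp add: frag_cmul_sum mult.commute)

lemma int_additive_mod:
  fixes G :: "int \<Rightarrow> 'a \<Rightarrow>\<^sub>0 int"
  assumes zero: "P 0" and diff: "\<And>a b. P a \<Longrightarrow> P b \<Longrightarrow> P (a - b)"
    and additive: "\<And>a b. P (G (a + b) - G a - G b)"
  shows "P (G k - frag_cmul k (G 1))"
proof (induction k rule: int_induct[where k=0])
  case base
  have "P (0 - (G (0 + 0) - G 0 - G 0))"
    using diff[OF zero additive] .
  then show ?case by simp
next
  case (step1 k)
  have "P ((G (k + 1) - G k - G 1) - (0 - (G k - frag_cmul k (G 1))))"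
    using diff[OF additive diff[OF zero step1(2)]] .
  then show ?case by (simp add: frag_cmul_distrib algebra_simps)
next
  case (step2 k)
  have "P ((G k - frag_cmul k (G 1)) - (G (k - 1 + 1) - G (k - 1) - G 1))"
    using diff[OF step2(2) additive] .
  then show ?case by (simp add: frag_cmul_diff_distrib algebra_simps)
qed

text \<open>The sum of the signs in the differential d_n.\<close>

definition alt_sum :: "nat \<Rightarrow> int" where
  "alt_sum n = (\<Sum>j\<le>n. (-1) ^ (n - j))"

lemma alt_sum_eq: "alt_sum n = (if even n then 1 else 0)"
proof (induction n)
  case 0
  then show ?case by (simp add: alt_sum_def)
next
  case (Suc n)
  have "alt_sum (Suc n) = (\<Sum>j\<le>n. (-1::int) ^ (Suc n - j)) + 1"
    by (simp add: alt_sum_def)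
  also have "(\<Sum>j\<le>n. (-1::int) ^ (Suc n - j)) = - alt_sum n"
    by (simp add: alt_sum_def Suc_diff_le sum_negf)
  finally show ?case using Suc by simp
qed

lemma trans_chain:
  assumes "trans r" and steps: "\<And>i. i < n \<Longrightarrow> (a i, a (Suc i)) \<in> r" and "i < j" "j \<le> n"
  shows "(a i, a j) \<in> r"
  using assms(3,4)
proof (induction j)
  case (Suc j)
  then show ?case
    using steps[of j] \<open>trans r\<close> by (cases "i = j") (auto dest: transD)
qed simp

definition constant_list :: "'a list \<Rightarrow> bool" where
  "constant_list xs \<longleftrightarrow> xs \<noteq> [] \<and> (\<forall>a\<in>set xs. a = hd xs)"

lemma constant_list_nth: "constant_list xs \<Longrightarrow> i < length xs \<Longrightarrow> xs ! i = hd xs"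
  unfolding constant_list_def by (metis nth_mem)

lemma constant_list_replicate: "constant_list xs \<Longrightarrow> xs = replicate (length xs) (hd xs)"
  unfolding constant_list_def by (metis replicate_length_same)

lemma constant_list_replicate_Suc [simp]:
  "constant_list (replicate (Suc n) x)" "hd (replicate (Suc n) x) = x"
  unfolding constant_list_def by (simp_all del: replicate_Suc)

section \<open>Linear categories and their chain complexes\<close>

locale linear_cat =
  fixes C :: "('o, 'm) lincat"
  assumes linear: "linear_category C"
begin

abbreviation "Ob \<equiv> lc_Ob C"
abbreviation "Hom \<equiv> lc_Hom C"
abbreviation "cmp \<equiv> lc_comp C"
abbreviation "hadd \<equiv> lc_add C"
abbreviation "hzero \<equiv> lc_zero C"
abbreviation "ident \<equiv> lc_id C"

lemma hom_comm_group: "x \<in> Ob \<Longrightarrow> y \<in> Ob \<Longrightarrow> comm_group (hom_group C x y)"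
  using linear by (simp add: linear_category_def)

lemma comp_closed:
  "\<lbrakk>x \<in> Ob; y \<in> Ob; z \<in> Ob; f \<in> Hom x y; g \<in> Hom y z\<rbrakk> \<Longrightarrow> cmp x y z g f \<in> Hom x z"
  using linear by (simp add: linear_category_def)

lemma ident_closed: "x \<in> Ob \<Longrightarrow> ident x \<in> Hom x x"
  using linear by (simp add: linear_category_def)

lemma comp_ident_left: "\<lbrakk>x \<in> Ob; y \<in> Ob; f \<in> Hom x y\<rbrakk> \<Longrightarrow> cmp x y y (ident y) f = f"
  using linear by (simp add: linear_category_def)

lemma comp_hadd_right:
  "\<lbrakk>x \<in> Ob; y \<in> Ob; z \<in> Ob; f \<in> Hom x y; f' \<in> Hom x y; g \<in> Hom y z\<rbrakk> \<Longrightarrow>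
     cmp x y z g (hadd x y f f') = hadd x z (cmp x y z g f) (cmp x y z g f')"
  using linear by (simp add: linear_category_def)

lemma comp_hadd_left:
  "\<lbrakk>x \<in> Ob; y \<in> Ob; z \<in> Ob; f \<in> Hom x y; g \<in> Hom y z; g' \<in> Hom y z\<rbrakk> \<Longrightarrow>
     cmp x y z (hadd y z g g') f = hadd x z (cmp x y z g f) (cmp x y z g' f)"
  using linear by (simp add: linear_category_def)

lemma hzero_closed:
  assumes "x \<in> Ob" "y \<in> Ob"
  shows "hzero x y \<in> Hom x y"
proof -
  interpret comm_group "hom_group C x y" using hom_comm_group assms by blast
  show ?thesis using one_closed by (simp add: hom_group_def)
qed

lemma hadd_closed: "\<lbrakk>x \<in> Ob; y \<in> Ob; a \<in> Hom x y; b \<in> Hom x y\<rbrakk> \<Longrightarrow> hadd x y a b \<in> Hom x y"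
  using group.subgroup_self[OF comm_group.axioms(2)[OF hom_comm_group]]
  by (fastforce simp: hom_group_def dest: subgroup.m_closed)

lemma hadd_hzero:
  assumes "x \<in> Ob" "y \<in> Ob"
  shows "hadd x y (hzero x y) (hzero x y) = hzero x y"
proof -
  interpret comm_group "hom_group C x y" using hom_comm_group assms by blast
  show ?thesis using l_one[OF one_closed] by (simp add: hom_group_def)
qed

lemma idempotent_is_hzero:
  assumes "x \<in> Ob" "y \<in> Ob" "a \<in> Hom x y" "hadd x y a a = a"
  shows "a = hzero x y"
proof -
  interpret comm_group "hom_group C x y" using hom_comm_group assms(1,2) by blast
  show ?thesis using l_cancel_one[of a a] assms(3,4) by (simp add: hom_group_def)
qed

lemma comp_hzero_right: "\<lbrakk>x \<in> Ob; y \<in> Ob; z \<in> Ob; g \<in> Hom y z\<rbrakk> \<Longrightarrow> cmp x y z g (hzero x y) = hzero x z"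
  by (metis hadd_hzero comp_closed comp_hadd_right idempotent_is_hzero hzero_closed)

lemma comp_hzero_left: "\<lbrakk>x \<in> Ob; y \<in> Ob; z \<in> Ob; f \<in> Hom x y\<rbrakk> \<Longrightarrow> cmp x y z (hzero y z) f = hzero x z"
  by (metis hadd_hzero comp_closed comp_hadd_left idempotent_is_hzero hzero_closed)

abbreviation "CG n \<equiv> chain_group C n"
abbreviation "gens n \<equiv> chain_gens C n"
abbreviation "rels n \<equiv> tensor_rels C n"

lemma carrier_chain_group: "c \<in> carrier (CG n) \<longleftrightarrow> Poly_Mapping.keys c \<subseteq> gens n"
  by (simp add: chain_group_def)

lemma chain_group_group: "group (CG n)"
  by (simp add: chain_group_def)

lemma chain_gensI:
  "\<lbrakk>length xs = Suc n; length fs = Suc n; set xs \<subseteq> Ob;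
    \<And>i. i \<le> n \<Longrightarrow> fs ! i \<in> Hom (xs ! i) (xs ! (Suc i mod Suc n))\<rbrakk> \<Longrightarrow> (xs, fs) \<in> gens n"
  unfolding chain_gens_def by auto

lemma chain_gensD:
  "(xs, fs) \<in> gens n \<Longrightarrow> length xs = Suc n \<and> length fs = Suc n \<and> set xs \<subseteq> Ob"
  unfolding chain_gens_def by auto

lemma chain_gens_hom:
  "(xs, fs) \<in> gens n \<Longrightarrow> i \<le> n \<Longrightarrow> fs ! i \<in> Hom (xs ! i) (xs ! (Suc i mod Suc n))"
  unfolding chain_gens_def by auto

lemma chain_gens_ob: "(xs, fs) \<in> gens n \<Longrightarrow> i \<le> n \<Longrightarrow> xs ! i \<in> Ob"
  using chain_gensD by (metis le_imp_less_Suc nth_mem subsetD)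

lemma chain_gens_hd: "(xs, fs) \<in> gens n \<Longrightarrow> hd xs \<in> Ob"
  using chain_gensD by (metis hd_in_set list.size(3) nat.distinct(1) subsetD)

lemma chain_gens_update:
  "\<lbrakk>(xs, fs) \<in> gens n; i \<le> n; h \<in> Hom (xs ! i) (xs ! (Suc i mod Suc n))\<rbrakk> \<Longrightarrow> (xs, fs[i := h]) \<in> gens n"
  unfolding chain_gens_def by (auto simp: nth_list_update)

lemma chain_gens_replicate:
  "x \<in> Ob \<Longrightarrow> length gs = Suc n \<Longrightarrow> set gs \<subseteq> Hom x x \<Longrightarrow> (replicate (Suc n) x, gs) \<in> gens n"
  unfolding chain_gens_def by (auto simp del: replicate_Suc simp: nth_mem subsetD)

lemma chain_gens_replicate_hom:
  assumes "(replicate (Suc n) x, gs) \<in> gens n"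
  shows "set gs \<subseteq> Hom x x"
proof
  fix g assume "g \<in> set gs"
  then obtain i where "i < length gs" "g = gs ! i" by (metis in_set_conv_nth)
  then show "g \<in> Hom x x" using chain_gens_hom[OF assms, of i] chain_gensD[OF assms]
    by (auto simp del: replicate_Suc)
qed

lemma face_zero_gens:
  assumes g: "(xs, fs) \<in> gens (Suc m)"
  shows "face C (Suc m) 0 (xs, fs) \<in> gens m"
proof -
  have len: "length xs = Suc (Suc m)" "length fs = Suc (Suc m)" and obs: "set xs \<subseteq> Ob"
    using chain_gensD[OF g] by auto
  define c where "c = cmp (xs ! Suc m) (xs ! 0) (xs ! 1) (fs ! 0) (fs ! Suc m)"
  have c_hom: "c \<in> Hom (xs ! Suc m) (xs ! 1)" unfolding c_def
    using chain_gens_hom[OF g, of 0] chain_gens_hom[OF g, of "Suc m"] chain_gens_ob[OF g]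
    by (intro comp_closed) auto
  show ?thesis unfolding face_def prod.case if_P[OF refl] diff_Suc_1 c_def[symmetric]
  proof (rule chain_gensI)
    show "length (tl xs) = Suc m" "length (take m (tl fs) @ [c]) = Suc m" using len by auto
    show "set (tl xs) \<subseteq> Ob" using obs by (cases xs) auto
  next
    fix i assume i: "i \<le> m"
    show "(take m (tl fs) @ [c]) ! i \<in> Hom (tl xs ! i) (tl xs ! (Suc i mod Suc m))"
    proof (cases "i < m")
      case True
      then show ?thesis using chain_gens_hom[OF g, of "Suc i"] len by (simp add: nth_append nth_tl)
    next
      case False
      then show ?thesis using i c_hom len by (simp add: nth_append nth_tl)
    qed
  qed
qed

lemma face_succ_gens:
  assumes g: "(xs, fs) \<in> gens (Suc m)" and k: "k \<le> m"
  shows "face C (Suc m) (Suc k) (xs, fs) \<in> gens m"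
proof -
  have len: "length xs = Suc (Suc m)" "length fs = Suc (Suc m)" and obs: "set xs \<subseteq> Ob"
    using chain_gensD[OF g] by auto
  define c where "c = cmp (xs ! k) (xs ! Suc k) (xs ! (Suc (Suc k) mod Suc (Suc m))) (fs ! Suc k) (fs ! k)"
  define xs' where "xs' = take (Suc k) xs @ drop (Suc (Suc k)) xs"
  define fs' where "fs' = take k fs @ [c] @ drop (Suc (Suc k)) fs"
  have face: "face C (Suc m) (Suc k) (xs, fs) = (xs', fs')"
    by (simp add: face_def c_def xs'_def fs'_def)
  have c_hom: "c \<in> Hom (xs ! k) (xs ! (Suc (Suc k) mod Suc (Suc m)))" unfolding c_def
    using chain_gens_hom[OF g, of k] chain_gens_hom[OF g, of "Suc k"] chain_gens_ob[OF g] k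
    by (intro comp_closed) auto
  have xs'_nth: "xs' ! i = (if i \<le> k then xs ! i else xs ! Suc i)" if "i < Suc m" for i
    using that len k by (auto simp: xs'_def nth_append)
  have fs'_nth: "fs' ! i = (if i < k then fs ! i else if i = k then c else fs ! Suc i)"
    if "i < Suc m" for i
  proof (cases "i < k")
    case False
    then obtain d where "i = k + d" by (metis le_Suc_ex not_less)
    then show ?thesis using len k that False by (cases d) (auto simp: fs'_def nth_append)
  qed (use len k in \<open>simp add: fs'_def nth_append\<close>)
  show ?thesis unfolding face
  proof (rule chain_gensI)
    show "length xs' = Suc m" "length fs' = Suc m" using len k by (auto simp: xs'_def fs'_def)
    show "set xs' \<subseteq> Ob"
      using obs set_take_subset[of "Suc k" xs] set_drop_subset[of "Suc (Suc k)" xs]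
      by (auto simp: xs'_def)
  next
    fix i assume i: "i \<le> m"
    have wrap: "Suc i mod Suc m = (if i = m then 0 else Suc i)" using i by auto
    consider "i < k" | "i = k" | "k < i" by linarith
    then show "fs' ! i \<in> Hom (xs' ! i) (xs' ! (Suc i mod Suc m))"
    proof cases
      case 1
      then show ?thesis using chain_gens_hom[OF g, of i] i k fs'_nth xs'_nth wrap by auto
    next
      case 2
      then show ?thesis using c_hom i k fs'_nth xs'_nth wrap by (cases "k = m") auto
    next
      case 3
      then show ?thesis using chain_gens_hom[OF g, of "Suc i"] i fs'_nth xs'_nth wrap
        by (cases "i = m") auto
    qed
  qed
qed

lemma face_gens: "(xs, fs) \<in> gens (Suc m) \<Longrightarrow> j \<le> Suc m \<Longrightarrow> face C (Suc m) j (xs, fs) \<in> gens m"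
  using face_zero_gens face_succ_gens by (cases j) auto

text \<open>The shape of a face: it deletes one object y from the cycle of objects and replaces the
  two morphisms a : u \<rightarrow> y and b : y \<rightarrow> v adjacent to y by their composite.  This is all the
  trace computation below needs to know about faces.\<close>

lemma face_zero_shape:
  assumes g: "(xs, fs) \<in> gens (Suc m)"
  obtains xs' fs' y u v a b rest where "face C (Suc m) 0 (xs, fs) = (xs', fs')"
    "set xs' \<subseteq> set xs" "set xs \<subseteq> insert y (set xs')" "y \<in> set xs" "u \<in> set xs'" "v \<in> set xs'"
    "a \<in> Hom u y" "b \<in> Hom y v"
    "mset fs = rest + {#a, b#}" "mset fs' = rest + {#cmp u y v b a#}"
proof -
  have len: "length xs = Suc (Suc m)" "length fs = Suc (Suc m)"
    using chain_gensD[OF g] by auto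
  obtain z t where xs: "xs = z # t" and t: "length t = Suc m" using len by (cases xs) auto
  obtain h r where fs0: "fs = h # r" and r: "length r = Suc m" using len by (cases fs) auto
  obtain q w where r_eq: "r = q @ [w]" using r by (cases r rule: rev_cases) auto
  have fs: "fs = h # q @ [w]" and q: "length q = m" using fs0 r_eq r by auto
  define c where "c = cmp (xs ! Suc m) (xs ! 0) (xs ! 1) (fs ! 0) (fs ! Suc m)"
  have "face C (Suc m) 0 (xs, fs) = (tl xs, take m (tl fs) @ [c])"
    by (simp add: face_def c_def)
  moreover have "mset fs = mset (take m (tl fs)) + {#fs ! Suc m, fs ! 0#}"
    using q by (simp add: fs nth_append)
  moreover have "mset (take m (tl fs) @ [c]) = mset (take m (tl fs)) + {#c#}"
    by simp
  moreover have "fs ! Suc m \<in> Hom (xs ! Suc m) (xs ! 0)" "fs ! 0 \<in> Hom (xs ! 0) (xs ! 1)"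
    using chain_gens_hom[OF g, of 0] chain_gens_hom[OF g, of "Suc m"] by auto
  moreover have "set (tl xs) \<subseteq> set xs" "set xs \<subseteq> insert (xs ! 0) (set (tl xs))" "xs ! 0 \<in> set xs"
    "xs ! Suc m \<in> set (tl xs)" "xs ! 1 \<in> set (tl xs)"
    using t by (auto simp: xs)
  ultimately show ?thesis
    by (intro that[of _ "take m (tl fs) @ [c]" "xs ! 0" "xs ! Suc m" "xs ! 1" "fs ! Suc m" "fs ! 0" "mset (take m (tl fs))"])
      (simp_all add: c_def)
qed

lemma face_succ_shape:
  assumes g: "(xs, fs) \<in> gens (Suc m)" and k: "k \<le> m"
  obtains xs' fs' y u v a b rest where "face C (Suc m) (Suc k) (xs, fs) = (xs', fs')"
    "set xs' \<subseteq> set xs" "set xs \<subseteq> insert y (set xs')" "y \<in> set xs" "u \<in> set xs'" "v \<in> set xs'"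
    "a \<in> Hom u y" "b \<in> Hom y v"
    "mset fs = rest + {#a, b#}" "mset fs' = rest + {#cmp u y v b a#}"
proof -
  have len: "length xs = Suc (Suc m)" "length fs = Suc (Suc m)"
    using chain_gensD[OF g] by auto
  define v where "v = xs ! (Suc (Suc k) mod Suc (Suc m))"
  define c where "c = cmp (xs ! k) (xs ! Suc k) v (fs ! Suc k) (fs ! k)"
  define xs' where "xs' = take (Suc k) xs @ drop (Suc (Suc k)) xs"
  define fs' where "fs' = take k fs @ [c] @ drop (Suc (Suc k)) fs"
  have xs_split: "xs = take (Suc k) xs @ xs ! Suc k # drop (Suc (Suc k)) xs"
    using len k by (simp add: Cons_nth_drop_Suc)
  have fs_split: "fs = take k fs @ fs ! k # fs ! Suc k # drop (Suc (Suc k)) fs"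
    using len k by (simp add: Cons_nth_drop_Suc)
  have set_xs: "set xs = set (take (Suc k) xs) \<union> insert (xs ! Suc k) (set (drop (Suc (Suc k)) xs))"
    using arg_cong[where f=set, OF xs_split] by simp
  have "face C (Suc m) (Suc k) (xs, fs) = (xs', fs')"
    by (simp add: face_def c_def v_def xs'_def fs'_def)
  moreover have "mset fs = mset (take k fs @ drop (Suc (Suc k)) fs) + {#fs ! k, fs ! Suc k#}"
  proof -
    have "mset fs = mset (take k fs @ fs ! k # fs ! Suc k # drop (Suc (Suc k)) fs)"
      using fs_split by (rule arg_cong)
    then show ?thesis by simp
  qed
  moreover have "mset fs' = mset (take k fs @ drop (Suc (Suc k)) fs) + {#c#}"
    by (simp add: fs'_def)
  moreover have "fs ! k \<in> Hom (xs ! k) (xs ! Suc k)" "fs ! Suc k \<in> Hom (xs ! Suc k) v"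
    using chain_gens_hom[OF g, of k] chain_gens_hom[OF g, of "Suc k"] k by (auto simp: v_def)
  moreover have "set xs' \<subseteq> set xs" "set xs \<subseteq> insert (xs ! Suc k) (set xs')"
    using set_xs by (auto simp: xs'_def)
  moreover have "xs ! Suc k \<in> set xs"
    using len k by (intro nth_mem) simp
  moreover have "xs ! k \<in> set xs'"
    using len k by (auto simp: xs'_def in_set_conv_nth)
  moreover have "v \<in> set xs'"
  proof (cases "k = m")
    case True
    then show ?thesis using len by (auto simp: v_def xs'_def in_set_conv_nth)
  next
    case False
    then have "xs ! Suc (Suc k) = drop (Suc (Suc k)) xs ! 0" "drop (Suc (Suc k)) xs \<noteq> []"
      using len k by auto
    then have "xs ! Suc (Suc k) \<in> set (drop (Suc (Suc k)) xs)"
      by (metis nth_mem length_greater_0_conv)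
    then show ?thesis using False k by (simp add: v_def xs'_def)
  qed
  ultimately show ?thesis
    by (intro that[of xs' fs' "xs ! Suc k" "xs ! k" v "fs ! k" "fs ! Suc k"
      "mset (take k fs @ drop (Suc (Suc k)) fs)"]) (simp_all add: c_def)
qed

lemma face_shape:
  assumes "(xs, fs) \<in> gens (Suc m)" "j \<le> Suc m"
  obtains xs' fs' y u v a b rest where "face C (Suc m) j (xs, fs) = (xs', fs')"
    "set xs' \<subseteq> set xs" "set xs \<subseteq> insert y (set xs')" "y \<in> set xs" "u \<in> set xs'" "v \<in> set xs'"
    "a \<in> Hom u y" "b \<in> Hom y v"
    "mset fs = rest + {#a, b#}" "mset fs' = rest + {#cmp u y v b a#}"
proof (cases j)
  case 0
  show ?thesis by (rule face_zero_shape[OF assms(1)]) (rule that, unfold 0)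
next
  case (Suc k)
  show ?thesis by (rule face_succ_shape[OF assms(1), of k]) (use assms(2) Suc in simp, rule that, simp add: Suc)
qed

definition bdry_gen :: "nat \<Rightarrow> 'o list \<times> 'm list \<Rightarrow> ('o list \<times> 'm list \<Rightarrow>\<^sub>0 int)" where
  "bdry_gen n s = (\<Sum>j\<le>n. frag_cmul ((-1) ^ (n - j)) (frag_of (face C n j s)))"

lemma bdry_eq: "bdry C n = frag_extend (bdry_gen n)"
  unfolding bdry_def bdry_gen_def by simp

lemma bdry_of: "bdry C n (frag_of s) = bdry_gen n s" by (simp add: bdry_eq)
lemma bdry_diff: "bdry C n (a - b) = bdry C n a - bdry C n b" by (simp add: bdry_eq frag_extend_diff)
lemma bdry_add: "bdry C n (a + b) = bdry C n a + bdry C n b" by (simp add: bdry_eq frag_extend_add)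
lemma bdry_zero: "bdry C n 0 = 0" by (simp add: bdry_eq)
lemma bdry_minus: "bdry C n (- a) = - bdry C n a" by (simp add: bdry_eq frag_extend_minus)

lemma bdry_closed: "c \<in> carrier (CG (Suc m)) \<Longrightarrow> bdry C (Suc m) c \<in> carrier (CG m)"
proof -
  have "Poly_Mapping.keys (bdry_gen (Suc m) s) \<subseteq> gens m" if "s \<in> gens (Suc m)" for s
  proof -
    have "Poly_Mapping.keys (bdry_gen (Suc m) s) \<subseteq>
        (\<Union>j\<le>Suc m. Poly_Mapping.keys (frag_cmul ((-1) ^ (Suc m - j)) (frag_of (face C (Suc m) j s))))"
      unfolding bdry_gen_def by (rule keys_sum)
    also have "\<dots> \<subseteq> gens m"
      using face_gens[of "fst s" "snd s" m] that keys_cmul by (fastforce simp: keys_frag_of)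
    finally show ?thesis .
  qed
  then show "c \<in> carrier (CG (Suc m)) \<Longrightarrow> bdry C (Suc m) c \<in> carrier (CG m)"
    unfolding carrier_chain_group bdry_eq using keys_frag_extend[of "bdry_gen (Suc m)" c] by blast
qed

lemma multilin_rels_closed: "multilin_rels C n \<subseteq> carrier (CG n)"
proof
  fix r assume "r \<in> multilin_rels C n"
  then obtain xs fs i f g where r: "r = frag_of (xs, fs[i := hadd (xs ! i) (xs ! (Suc i mod Suc n)) f g])
       - frag_of (xs, fs[i := f]) - frag_of (xs, fs[i := g])"
    and g: "(xs, fs) \<in> gens n" "i \<le> n"
    and fg: "f \<in> Hom (xs ! i) (xs ! (Suc i mod Suc n))" "g \<in> Hom (xs ! i) (xs ! (Suc i mod Suc n))"
    unfolding multilin_rels_def by blast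
  have "xs ! i \<in> Ob" "xs ! (Suc i mod Suc n) \<in> Ob"
    using g chain_gens_ob by auto
  then have "(xs, fs[i := hadd (xs ! i) (xs ! (Suc i mod Suc n)) f g]) \<in> gens n"
    using fg by (intro chain_gens_update[OF g] hadd_closed)
  moreover have "(xs, fs[i := f]) \<in> gens n" "(xs, fs[i := g]) \<in> gens n"
    using chain_gens_update[OF g] fg by auto
  ultimately show "r \<in> carrier (CG n)"
    unfolding r carrier_chain_group
    by (intro order_trans[OF keys_diff] Un_least) (auto simp: keys_frag_of)
qed

lemma tensor_rels_subgroup: "subgroup (rels n) (CG n)"
  unfolding tensor_rels_def
  using group.generate_is_subgroup[OF chain_group_group multilin_rels_closed] .

lemma tensor_rels_closed: "a \<in> rels n \<Longrightarrow> a \<in> carrier (CG n)"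
  using subgroup.subset[OF tensor_rels_subgroup] by blast

lemma tensor_rels_zero: "0 \<in> rels n"
  using subgroup.one_closed[OF tensor_rels_subgroup, of n] by (simp add: chain_group_def)

lemma tensor_rels_add: "a \<in> rels n \<Longrightarrow> b \<in> rels n \<Longrightarrow> a + b \<in> rels n"
  using subgroup.m_closed[OF tensor_rels_subgroup[of n], of a b] by (simp add: chain_group_def)

lemma tensor_rels_minus: "a \<in> rels n \<Longrightarrow> - a \<in> rels n"
  using subgroup.m_inv_closed[OF tensor_rels_subgroup[of n], of a] tensor_rels_closed[of a n]
  by (simp add: chain_group_def)

lemma tensor_rels_diff: "a \<in> rels n \<Longrightarrow> b \<in> rels n \<Longrightarrow> a - b \<in> rels n"
  by (metis tensor_rels_add tensor_rels_minus diff_conv_add_uminus)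

lemma tensor_rels_cmul: "a \<in> rels n \<Longrightarrow> frag_cmul k a \<in> rels n"
  by (rule frag_closure_minus_cmul[where P="\<lambda>x. x \<in> rels n"])
    (auto intro: tensor_rels_zero tensor_rels_diff)

lemma slot_additive:
  "\<lbrakk>(xs, fs) \<in> gens n; i \<le> n; f \<in> Hom (xs ! i) (xs ! (Suc i mod Suc n));
    g \<in> Hom (xs ! i) (xs ! (Suc i mod Suc n))\<rbrakk> \<Longrightarrow>
   frag_of (xs, fs[i := hadd (xs ! i) (xs ! (Suc i mod Suc n)) f g])
     - frag_of (xs, fs[i := f]) - frag_of (xs, fs[i := g]) \<in> rels n"
  unfolding tensor_rels_def multilin_rels_def by (rule generate.incl) blast

lemma zero_slot_in_tensor_rels:
  assumes g: "(xs, fs) \<in> gens n" and i: "i \<le> n" and zero: "fs ! i = hzero (xs ! i) (xs ! (Suc i mod Suc n))"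
  shows "frag_of (xs, fs) \<in> rels n"
proof -
  have ob: "xs ! i \<in> Ob" "xs ! (Suc i mod Suc n) \<in> Ob"
    using g i chain_gens_ob by auto
  have hom: "fs ! i \<in> Hom (xs ! i) (xs ! (Suc i mod Suc n))"
    using chain_gens_hom[OF g i] .
  have "hadd (xs ! i) (xs ! (Suc i mod Suc n)) (fs ! i) (fs ! i) = fs ! i"
    using zero hadd_hzero[OF ob] by simp
  then have "- frag_of (xs, fs) \<in> rels n"
    using slot_additive[OF g i hom hom] by simp
  then show ?thesis using tensor_rels_minus by fastforce
qed

lemma boundaries_subgroup: "subgroup (boundaries C n) (CG n)"
  unfolding boundaries_def
  using bdry_closed tensor_rels_closed
  by (intro group.generate_is_subgroup[OF chain_group_group]) blast

lemma tensor_rels_in_boundaries: "c \<in> rels n \<Longrightarrow> c \<in> boundaries C n"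
  unfolding boundaries_def by (rule generate.incl) simp

lemma boundaries_add: "a \<in> boundaries C n \<Longrightarrow> b \<in> boundaries C n \<Longrightarrow> a + b \<in> boundaries C n"
  using subgroup.m_closed[OF boundaries_subgroup[of n], of a b] by (simp add: chain_group_def)

lemma bdry_in_boundaries: "d \<in> carrier (CG (Suc n)) \<Longrightarrow> bdry C (Suc n) d \<in> boundaries C n"
  unfolding boundaries_def by (rule generate.incl) simp

lemma cycles_subgroup: "subgroup (cycles C (Suc m)) (CG (Suc m))"
proof (rule subgroup.intro)
  show "cycles C (Suc m) \<subseteq> carrier (CG (Suc m))"
    by (auto simp: cycles_def)
  show "x \<otimes>\<^bsub>CG (Suc m)\<^esub> y \<in> cycles C (Suc m)" if "x \<in> cycles C (Suc m)" "y \<in> cycles C (Suc m)" for x y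
    using that tensor_rels_add subgroup.m_closed[OF group.subgroup_self[OF chain_group_group]]
    by (auto simp: cycles_def bdry_add chain_group_def)
  show "\<one>\<^bsub>CG (Suc m)\<^esub> \<in> cycles C (Suc m)"
    by (simp add: cycles_def chain_group_def bdry_zero tensor_rels_zero)
  show "inv\<^bsub>CG (Suc m)\<^esub> x \<in> cycles C (Suc m)" if "x \<in> cycles C (Suc m)" for x
    using that tensor_rels_minus by (auto simp: cycles_def bdry_minus chain_group_def)
qed

end

section \<open>Upper-triangular categories\<close>

locale upper_tri_cat = linear_cat C for C :: "('o, 'm) lincat" +
  assumes upper_tri: "upper_triangular C"
begin

lemma upper_triangular_order:
  obtains le where "partial_order_on Ob le"
    "\<And>x y f. \<lbrakk>x \<in> Ob; y \<in> Ob; f \<in> Hom x y; f \<noteq> hzero x y\<rbrakk> \<Longrightarrow> (x, y) \<in> le"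
  using upper_tri unfolding upper_triangular_def by blast

text \<open>A composite x \<rightarrow> y \<rightarrow> x through a different object vanishes: one of the two factors is zero.\<close>

lemma comp_through_other_zero:
  assumes "x \<in> Ob" "y \<in> Ob" "x \<noteq> y" "f \<in> Hom x y" "g \<in> Hom y x"
  shows "cmp x y x g f = hzero x x"
proof -
  obtain le where po: "partial_order_on Ob le"
    and nz: "\<And>x y f. \<lbrakk>x \<in> Ob; y \<in> Ob; f \<in> Hom x y; f \<noteq> hzero x y\<rbrakk> \<Longrightarrow> (x, y) \<in> le"
    using upper_triangular_order by blast
  have "f = hzero x y \<or> g = hzero y x"
    using nz[of x y f] nz[of y x g] po assms unfolding partial_order_on_def antisym_def by blast
  then show ?thesis
    using assms comp_hzero_left comp_hzero_right by blast
qed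

text \<open>A generator whose morphisms are all nonzero runs around a loop at a single object: the
  objects form a cycle x_0 \<le> x_1 \<le> ... \<le> x_n \<le> x_0 for the partial order.\<close>

lemma nonzero_gen_constant:
  assumes g: "(xs, fs) \<in> gens n"
    and nz: "\<And>i. i \<le> n \<Longrightarrow> fs ! i \<noteq> hzero (xs ! i) (xs ! (Suc i mod Suc n))"
  shows "constant_list xs"
proof -
  obtain le where po: "partial_order_on Ob le"
    and le_nz: "\<And>x y f. \<lbrakk>x \<in> Ob; y \<in> Ob; f \<in> Hom x y; f \<noteq> hzero x y\<rbrakk> \<Longrightarrow> (x, y) \<in> le"
    using upper_triangular_order by blast
  have tr: "trans le" and refl: "\<And>x. x \<in> Ob \<Longrightarrow> (x, x) \<in> le"
    using po unfolding partial_order_on_def preorder_on_def refl_on_def by blast+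
  have len: "length xs = Suc n"
    using chain_gensD[OF g] by simp
  have step: "(xs ! i, xs ! (Suc i mod Suc n)) \<in> le" if i: "i \<le> n" for i
  proof -
    have "Suc i mod Suc n \<le> n"
      using mod_less_divisor[of "Suc n" "Suc i"] by simp
    then show ?thesis
      using le_nz chain_gens_ob[OF g] chain_gens_hom[OF g i] nz[OF i] i by blast
  qed
  have chain: "(xs ! i, xs ! j) \<in> le" if "i < j" "j \<le> n" for i j
  proof (rule trans_chain[OF tr _ that, of "(!) xs"])
    show "(xs ! i, xs ! Suc i) \<in> le" if "i < n" for i
      using step[of i] that by simp
  qed
  have wrap: "(xs ! n, xs ! 0) \<in> le"
    using step[of n] by simp
  have same: "xs ! k = xs ! 0" if k: "k \<le> n" for k
  proof -
    have "(xs ! 0, xs ! k) \<in> le"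
    proof (cases "k = 0")
      case True
      then show ?thesis using refl chain_gens_ob[OF g, of 0] by simp
    next
      case False
      then show ?thesis using chain[of 0 k] k by simp
    qed
    moreover have "(xs ! k, xs ! 0) \<in> le"
    proof (cases "k = n")
      case True
      then show ?thesis using wrap by simp
    next
      case False
      then have "(xs ! k, xs ! n) \<in> le" using chain[of k n] k by simp
      then show ?thesis using transD[OF tr _ wrap] by blast
    qed
    moreover have "antisym le"
      using po unfolding partial_order_on_def by blast
    ultimately show ?thesis by (auto dest: antisymD)
  qed
  have hd: "hd xs = xs ! 0"
    using len by (cases xs) auto
  have "a = hd xs" if "a \<in> set xs" for a
  proof -
    obtain k where "k < length xs" "a = xs ! k" using \<open>a \<in> set xs\<close> by (metis in_set_conv_nth)
    then show ?thesis using same[of k] len hd by simp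
  qed
  then show ?thesis
    using len unfolding constant_list_def by auto
qed

end

section \<open>Strongly upper-triangular categories\<close>

locale sut_cat = linear_cat C for C :: "('o, 'm) lincat" +
  assumes strongly_ut: "strongly_upper_triangular C"
begin

sublocale upper_tri_cat
  using strongly_ut by unfold_locales (simp add: strongly_upper_triangular_def)

definition phi :: "'o \<Rightarrow> 'm \<Rightarrow> int" where
  "phi x = (SOME h. h \<in> ring_iso (end_ring C x) \<Z>)"

lemma phi_iso: "x \<in> Ob \<Longrightarrow> phi x \<in> ring_iso (end_ring C x) \<Z>"
  unfolding phi_def using strongly_ut unfolding strongly_upper_triangular_def is_ring_iso_def
  by (metis (no_types, lifting) ex_in_conv someI_ex)

lemma phi_comp: "\<lbrakk>x \<in> Ob; a \<in> Hom x x; b \<in> Hom x x\<rbrakk> \<Longrightarrow> phi x (cmp x x x a b) = phi x a * phi x b"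
  using phi_iso[of x] by (simp add: ring_iso_def ring_hom_def end_ring_def)

lemma phi_hadd: "\<lbrakk>x \<in> Ob; a \<in> Hom x x; b \<in> Hom x x\<rbrakk> \<Longrightarrow> phi x (hadd x x a b) = phi x a + phi x b"
  using phi_iso[of x] by (simp add: ring_iso_def ring_hom_def end_ring_def)

lemma phi_ident: "x \<in> Ob \<Longrightarrow> phi x (ident x) = 1"
  using phi_iso[of x] by (simp add: ring_iso_def ring_hom_def end_ring_def)

lemma phi_bij: "x \<in> Ob \<Longrightarrow> bij_betw (phi x) (Hom x x) UNIV"
  using phi_iso[of x] by (simp add: ring_iso_def end_ring_def)

lemma phi_hzero: "x \<in> Ob \<Longrightarrow> phi x (hzero x x) = 0"
  using phi_hadd[of x "hzero x x" "hzero x x"] hadd_hzero hzero_closed by simp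

lemma loop_slot_reduce:
  assumes g: "(xs, fs) \<in> gens n" and c: "constant_list xs" and i: "i \<le> n"
    and h: "h \<in> Hom (hd xs) (hd xs)"
  shows "frag_of (xs, fs[i := h]) - frag_cmul (phi (hd xs) h) (frag_of (xs, fs[i := ident (hd xs)]))
           \<in> rels n"
proof -
  define x where "x = hd xs"
  have len: "length xs = Suc n"
    using chain_gensD[OF g] by simp
  have ends: "xs ! i = x" "xs ! (Suc i mod Suc n) = x"
    using constant_list_nth[OF c] len i by (auto simp: x_def)
  have x: "x \<in> Ob"
    using chain_gens_hd[OF g] by (simp add: x_def)
  define gk where "gk k = inv_into (Hom x x) (phi x) k" for k
  have bij: "bij_betw (phi x) (Hom x x) UNIV"
    by (rule phi_bij[OF x])
  have gk_hom: "gk k \<in> Hom x x" for k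
    unfolding gk_def using bij by (metis UNIV_I bij_betw_def inv_into_into)
  have phi_gk: "phi x (gk k) = k" for k
    unfolding gk_def using bij by (simp add: bij_betw_inv_into_right)
  have gk_phi: "a \<in> Hom x x \<Longrightarrow> gk (phi x a) = a" for a
    unfolding gk_def using bij by (simp add: bij_betw_inv_into_left)
  have gk_add: "gk (a + b) = hadd x x (gk a) (gk b)" for a b
    using gk_phi[OF hadd_closed[OF x x gk_hom gk_hom]] by (simp add: phi_hadd[OF x gk_hom gk_hom] phi_gk)
  define G where "G k = frag_of (xs, fs[i := gk k])" for k
  have "G k - frag_cmul k (G 1) \<in> rels n" for k
  proof (rule int_additive_mod[where P="\<lambda>c. c \<in> rels n"])
    show "G (a + b) - G a - G b \<in> rels n" for a b
      unfolding G_def gk_add using slot_additive[OF g i, of "gk a" "gk b"] ends gk_hom by simp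
  qed (auto intro: tensor_rels_zero tensor_rels_diff)
  moreover have "gk 1 = ident x"
    using gk_phi[OF ident_closed[OF x]] by (simp add: phi_ident[OF x])
  ultimately have "G (phi x h) - frag_cmul (phi x h) (frag_of (xs, fs[i := ident x])) \<in> rels n"
    by (simp add: G_def)
  then show ?thesis
    using gk_phi h by (simp add: G_def x_def)
qed

definition unit_gen :: "nat \<Rightarrow> 'o \<Rightarrow> 'o list \<times> 'm list" where
  "unit_gen n x = (replicate (Suc n) x, replicate (Suc n) (ident x))"

definition unit_chain :: "nat \<Rightarrow> ('o \<Rightarrow>\<^sub>0 int) \<Rightarrow> ('o list \<times> 'm list \<Rightarrow>\<^sub>0 int)" where
  "unit_chain n a = frag_extend (\<lambda>x. frag_of (unit_gen n x)) a"

lemma unit_gen_gens: "x \<in> Ob \<Longrightarrow> unit_gen n x \<in> gens n"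
  unfolding unit_gen_def by (rule chain_gens_replicate) (auto simp: ident_closed)

lemma unit_chain_closed: "Poly_Mapping.keys a \<subseteq> Ob \<Longrightarrow> unit_chain n a \<in> carrier (CG n)"
  unfolding carrier_chain_group unit_chain_def
  using keys_frag_extend[of "\<lambda>x. frag_of (unit_gen n x)" a] unit_gen_gens by (fastforce simp: keys_frag_of)

text \<open>Modulo the tensor relations, a loop at x equals the product of the integers phi x f_i
  times the unit loop at x: replace the slots by multiples of the identity one at a time.\<close>

lemma loop_reduce:
  assumes g: "(xs, fs) \<in> gens n" and c: "constant_list xs"
  shows "frag_of (xs, fs) - frag_cmul (\<Prod>f\<leftarrow>fs. phi (hd xs) f) (frag_of (unit_gen n (hd xs))) \<in> rels n"
proof -
  define x where "x = hd xs"
  have len: "length fs = Suc n"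
    using chain_gensD[OF g] by simp
  have xs: "xs = replicate (Suc n) x"
    using constant_list_replicate[OF c] chain_gensD[OF g] by (simp add: x_def)
  have x: "x \<in> Ob"
    using chain_gens_hd[OF g] by (simp add: x_def)
  have fs_hom: "set fs \<subseteq> Hom x x"
    using chain_gens_replicate_hom g xs by simp
  define partial where "partial m = replicate m (ident x) @ drop m fs" for m
  have "frag_of (xs, fs) - frag_cmul (\<Prod>f\<leftarrow>take m fs. phi x f) (frag_of (xs, partial m)) \<in> rels n"
    if "m \<le> Suc n" for m
    using that
  proof (induction m)
    case 0
    then show ?case by (simp add: partial_def tensor_rels_zero)
  next
    case (Suc m)
    have m: "m < length fs" "m \<le> n"
      using Suc.prems len by simp_all
    have fm: "fs ! m \<in> Hom x x"
      using fs_hom m(1) nth_mem by blast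
    have "(xs, partial m) \<in> gens n"
      unfolding xs partial_def using len m fs_hom ident_closed[OF x]
      by (intro chain_gens_replicate[OF x]) (auto dest: in_set_dropD)
    moreover have "(partial m)[m := fs ! m] = partial m" "(partial m)[m := ident x] = partial (Suc m)"
      using m by (simp_all add: partial_def list_update_append Cons_nth_drop_Suc[symmetric]
          replicate_append_same)
    ultimately have slot: "frag_of (xs, partial m) - frag_cmul (phi x (fs ! m)) (frag_of (xs, partial (Suc m)))
        \<in> rels n"
      using loop_slot_reduce[of xs "partial m" n m "fs ! m"] m(2) fm by (simp add: xs del: replicate_Suc)
    have eq: "frag_of (xs, fs) - frag_cmul (\<Prod>f\<leftarrow>take (Suc m) fs. phi x f) (frag_of (xs, partial (Suc m)))
        = (frag_of (xs, fs) - frag_cmul (\<Prod>f\<leftarrow>take m fs. phi x f) (frag_of (xs, partial m)))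
          + frag_cmul (\<Prod>f\<leftarrow>take m fs. phi x f)
              (frag_of (xs, partial m) - frag_cmul (phi x (fs ! m)) (frag_of (xs, partial (Suc m))))"
      using m(1) by (simp add: take_Suc_conv_app_nth frag_cmul_diff_distrib2 mult.commute)
    show ?case
      unfolding eq using Suc slot by (intro tensor_rels_add tensor_rels_cmul) simp_all
  qed
  from this[of "Suc n"] show ?thesis
    using len by (simp add: partial_def unit_gen_def xs flip: x_def)
qed

subsection \<open>The trace map\<close>

definition trace_gen :: "'o list \<times> 'm list \<Rightarrow> 'o \<Rightarrow>\<^sub>0 int" where
  "trace_gen s = (if constant_list (fst s)
     then frag_cmul (\<Prod>f\<leftarrow>snd s. phi (hd (fst s)) f) (frag_of (hd (fst s))) else 0)"

definition trace :: "('o list \<times> 'm list \<Rightarrow>\<^sub>0 int) \<Rightarrow> 'o \<Rightarrow>\<^sub>0 int" where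
  "trace c = frag_extend trace_gen c"

lemma trace_of [simp]: "trace (frag_of s) = trace_gen s" by (simp add: trace_def)
lemma trace_add: "trace (a + b) = trace a + trace b" by (simp add: trace_def frag_extend_add)
lemma trace_diff: "trace (a - b) = trace a - trace b" by (simp add: trace_def frag_extend_diff)

lemma trace_closed: "c \<in> carrier (CG n) \<Longrightarrow> Poly_Mapping.keys (trace c) \<subseteq> Ob"
proof -
  have "Poly_Mapping.keys (trace_gen s) \<subseteq> Ob" if "s \<in> gens n" for s
    using that chain_gens_hd[of "fst s" "snd s" n] keys_cmul by (auto simp: trace_gen_def)
  then show "c \<in> carrier (CG n) \<Longrightarrow> ?thesis"
    unfolding carrier_chain_group trace_def using keys_frag_extend[of trace_gen c] by blast
qed

lemma trace_hom: "group_hom (CG n) (free_Abelian_group Ob) trace"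
proof (rule group_hom.intro)
  show "group_hom_axioms (CG n) (free_Abelian_group Ob) trace"
    by (rule group_hom_axioms.intro) (auto simp: hom_def trace_closed trace_add chain_group_def)
qed (simp_all add: chain_group_group)

text \<open>The trace kills the multilinearity relations, because each phi x is additive.\<close>

lemma trace_multilin_rels: "r \<in> multilin_rels C n \<Longrightarrow> trace r = 0"
proof -
  assume "r \<in> multilin_rels C n"
  then obtain xs fs i f g where r: "r = frag_of (xs, fs[i := hadd (xs ! i) (xs ! (Suc i mod Suc n)) f g])
       - frag_of (xs, fs[i := f]) - frag_of (xs, fs[i := g])"
    and g: "(xs, fs) \<in> gens n" "i \<le> n"
    and fg: "f \<in> Hom (xs ! i) (xs ! (Suc i mod Suc n))" "g \<in> Hom (xs ! i) (xs ! (Suc i mod Suc n))"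
    unfolding multilin_rels_def by blast
  show ?thesis
  proof (cases "constant_list xs")
    case False
    then show ?thesis by (simp add: r trace_diff trace_gen_def)
  next
    case True
    define x where "x = hd xs"
    have len: "length xs = Suc n" "length fs = Suc n"
      using chain_gensD[OF g(1)] by auto
    have ends: "xs ! i = x" "xs ! (Suc i mod Suc n) = x"
      using constant_list_nth[OF True] len g(2) by (auto simp: x_def)
    have x: "x \<in> Ob"
      using chain_gens_hd[OF g(1)] by (simp add: x_def)
    have prod_update: "(\<Prod>f\<leftarrow>fs[i := h]. phi x f)
        = (\<Prod>f\<leftarrow>take i fs. phi x f) * phi x h * (\<Prod>f\<leftarrow>drop (Suc i) fs. phi x f)" for h
      using len g(2) by (simp add: upd_conv_take_nth_drop mult.assoc)
    have trace_update: "trace_gen (xs, fs[i := h])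
        = frag_cmul ((\<Prod>f\<leftarrow>take i fs. phi x f) * phi x h * (\<Prod>f\<leftarrow>drop (Suc i) fs. phi x f)) (frag_of x)"
      for h using True by (simp add: trace_gen_def prod_update flip: x_def)
    show ?thesis
      using fg unfolding ends
      by (simp add: r ends trace_diff trace_update phi_hadd[OF x] flip: frag_cmul_diff_distrib)
        (simp add: algebra_simps)
  qed
qed

lemma trace_tensor_rels: "c \<in> rels n \<Longrightarrow> trace c = 0"
proof -
  have "rels n \<subseteq> kernel (CG n) (free_Abelian_group Ob) trace"
    unfolding tensor_rels_def
  proof (rule group.generate_subgroup_incl[OF chain_group_group])
    show "multilin_rels C n \<subseteq> kernel (CG n) (free_Abelian_group Ob) trace"
      using multilin_rels_closed trace_multilin_rels by (auto simp: kernel_def)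
  qed (rule group_hom.subgroup_kernel[OF trace_hom])
  then show "c \<in> rels n \<Longrightarrow> trace c = 0"
    by (auto simp: kernel_def)
qed

text \<open>Conversely every chain agrees with the unit loops weighted by its trace, modulo the
  relations: a generator that is not a loop has a zero slot by upper triangularity.\<close>

lemma reduce_gen: "s \<in> gens n \<Longrightarrow> frag_of s - unit_chain n (trace_gen s) \<in> rels n"
proof (cases s)
  case (Pair xs fs)
  assume g: "s \<in> gens n"
  show ?thesis
  proof (cases "constant_list xs")
    case True
    then show ?thesis
      using loop_reduce[of xs fs n] g Pair by (simp add: trace_gen_def unit_chain_def frag_extend_cmul)
  next
    case False
    then obtain i where "i \<le> n" "fs ! i = hzero (xs ! i) (xs ! (Suc i mod Suc n))"
      using nonzero_gen_constant g Pair by blast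
    then show ?thesis
      using zero_slot_in_tensor_rels g Pair False by (simp add: trace_gen_def unit_chain_def)
  qed
qed

lemma reduce: "c \<in> carrier (CG n) \<Longrightarrow> c - unit_chain n (trace c) \<in> rels n"
  unfolding carrier_chain_group
proof (induction c rule: frag_induction)
  case zero
  then show ?case by (simp add: trace_def unit_chain_def tensor_rels_zero)
next
  case (one s)
  then show ?case using reduce_gen by simp
next
  case (diff a b)
  have eq: "a - b - unit_chain n (trace (a - b))
      = (a - unit_chain n (trace a)) - (b - unit_chain n (trace b))"
    by (simp add: trace_diff unit_chain_def frag_extend_diff)
  show ?case unfolding eq by (rule tensor_rels_diff[OF diff])
qed

theorem tensor_rels_iff_trace: "c \<in> carrier (CG n) \<Longrightarrow> c \<in> rels n \<longleftrightarrow> trace c = 0"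
  using trace_tensor_rels reduce[of c n] by (auto simp: unit_chain_def)

lemma trace_unit_chain: "Poly_Mapping.keys a \<subseteq> Ob \<Longrightarrow> trace (unit_chain n a) = a"
proof -
  assume a: "Poly_Mapping.keys a \<subseteq> Ob"
  have "trace (unit_chain n a) = frag_extend (trace_gen \<circ> unit_gen n) a"
    unfolding trace_def unit_chain_def using frag_extend_compose[of trace_gen "unit_gen n" a]
    by (simp add: o_def)
  also have "\<dots> = frag_extend frag_of a"
    using a by (intro frag_extend_eq) (auto simp: trace_gen_def unit_gen_def phi_ident simp del: replicate_Suc)
  finally show ?thesis
    by (simp flip: frag_expansion)
qed

text \<open>If the generator is a
  loop at x, so is each face, and phi x turns the composite b \<circ> a into the product of the
  values on a and b.  If it is not a loop but a face is, the face deleted the only object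
  y \<noteq> x, and the composite x \<rightarrow> y \<rightarrow> x is zero.\<close>

lemma trace_face:
  assumes g: "(xs, fs) \<in> gens (Suc m)" and j: "j \<le> Suc m"
  shows "trace_gen (face C (Suc m) j (xs, fs)) = trace_gen (xs, fs)"
proof -
  obtain xs' fs' y u v a b rest where face: "face C (Suc m) j (xs, fs) = (xs', fs')"
    and sets: "set xs' \<subseteq> set xs" "set xs \<subseteq> insert y (set xs')" "y \<in> set xs" "u \<in> set xs'" "v \<in> set xs'"
    and ab: "a \<in> Hom u y" "b \<in> Hom y v"
    and fs: "mset fs = rest + {#a, b#}" and fs': "mset fs' = rest + {#cmp u y v b a#}"
    by (rule face_shape[OF g j])
  have g': "(xs', fs') \<in> gens m"
    using face_gens[OF g j] face by simp
  have ne: "xs' \<noteq> []" "xs \<noteq> []"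
    using chain_gensD[OF g'] chain_gensD[OF g] by auto
  have prod_phi: "(\<Prod>f\<leftarrow>zs. phi x f) = prod_mset (image_mset (phi x) (mset zs))" for x zs
    by (simp only: mset_map[symmetric] prod_mset_prod_list)
  show ?thesis
  proof (cases "constant_list xs")
    case True
    define x where "x = hd xs"
    have all_x: "\<forall>z\<in>set xs. z = x"
      using True by (simp add: constant_list_def x_def)
    have hd': "hd xs' = x"
      using hd_in_set[OF ne(1)] sets(1) all_x by auto
    then have xs': "constant_list xs'" "hd xs' = x"
      using all_x sets(1) ne(1) by (auto simp: constant_list_def)
    have uyv: "u = x" "y = x" "v = x"
      using all_x sets(1,3,4,5) by blast+
    have x: "x \<in> Ob"
      using chain_gens_hd[OF g] by (simp add: x_def)
    have phi_c: "phi x (cmp u y v b a) = phi x a * phi x b"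
      using ab phi_comp[OF x] by (simp add: uyv)
    have "(\<Prod>f\<leftarrow>fs'. phi x f) = prod_mset (image_mset (phi x) rest) * phi x (cmp u y v b a)"
      using prod_phi[of x fs'] fs' by simp
    also have "\<dots> = (\<Prod>f\<leftarrow>fs. phi x f)"
      using prod_phi[of x fs] fs phi_c by (simp add: ac_simps)
    finally show ?thesis
      using True xs' face by (simp add: trace_gen_def flip: x_def)
  next
    case False
    show ?thesis
    proof (cases "constant_list xs'")
      case True
      define x where "x = hd xs'"
      have all_x: "\<forall>z\<in>set xs'. z = x"
        using True by (simp add: constant_list_def x_def)
      have x: "x \<in> Ob" "y \<in> Ob"
        using chain_gens_hd[OF g'] chain_gensD[OF g] sets(3) by (auto simp: x_def)
      have "y \<noteq> x"
      proof
        assume "y = x"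
        then have all: "\<forall>z\<in>set xs. z = x"
          using sets(2) all_x by blast
        have "hd xs = x"
          using all hd_in_set[OF ne(2)] by blast
        then have "constant_list xs"
          using all ne(2) unfolding constant_list_def by force
        with False show False by simp
      qed
      moreover have "u = x" "v = x"
        using all_x sets(4,5) by blast+
      ultimately have "cmp u y v b a = hzero x x"
        using comp_through_other_zero[OF x] ab by simp
      then have "(\<Prod>f\<leftarrow>fs'. phi x f) = 0"
        using phi_hzero[OF x(1)] unfolding prod_phi fs' by simp
      then show ?thesis
        using False True face by (simp add: trace_gen_def x_def)
    next
      case False
      then show ?thesis
        using \<open>\<not> constant_list xs\<close> face by (simp add: trace_gen_def)
    qed
  qed
qed

lemma trace_bdry:
  "c \<in> carrier (CG (Suc m)) \<Longrightarrow> trace (bdry C (Suc m) c) = frag_cmul (alt_sum (Suc m)) (trace c)"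
  unfolding carrier_chain_group
proof (induction c rule: frag_induction)
  case zero
  then show ?case by (simp add: bdry_zero trace_def)
next
  case (one s)
  have "trace (bdry_gen (Suc m) s)
      = (\<Sum>j\<le>Suc m. frag_cmul ((-1) ^ (Suc m - j)) (trace_gen (face C (Suc m) j s)))"
    unfolding bdry_gen_def trace_def by (simp add: frag_extend_sum o_def frag_extend_cmul del: sum.atMost_Suc)
  also have "\<dots> = (\<Sum>j\<le>Suc m. frag_cmul ((-1) ^ (Suc m - j)) (trace_gen s))"
    using trace_face[of "fst s" "snd s" m] one by (intro sum.cong) auto
  finally show ?case
    by (simp add: bdry_of sum_frag_cmul_const alt_sum_def del: sum.atMost_Suc)
next
  case (diff a b)
  then show ?case by (simp add: bdry_diff trace_diff frag_cmul_diff_distrib2)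
qed

text \<open>The faces of a unit loop are unit loops, so d_n is multiplication by the alternating sum on
  unit loops as well.\<close>

lemma face_unit_gen: "x \<in> Ob \<Longrightarrow> j \<le> Suc m \<Longrightarrow> face C (Suc m) j (unit_gen (Suc m) x) = unit_gen m x"
proof -
  assume x: "x \<in> Ob" and j: "j \<le> Suc m"
  have id: "cmp x x x (ident x) (ident x) = ident x"
    using comp_ident_left[OF x x ident_closed[OF x]] .
  show ?thesis
  proof (cases j)
    case 0
    then show ?thesis using id
      by (simp add: face_def unit_gen_def del: replicate_Suc)
        (simp add: replicate_append_same[symmetric])
  next
    case (Suc k)
    then have k: "k \<le> m" using j by simp
    have "replicate k a @ a # replicate (m - k) a = replicate (k + Suc (m - k)) a" for a :: 'a
      by (simp only: replicate_add replicate_Suc)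
    then have ids: "replicate k a @ a # replicate (m - k) a = replicate (Suc m) a" for a :: 'a
      using k by simp
    moreover have "replicate (Suc k) x @ replicate (m - k) x = replicate (Suc m) x"
      using k by (simp add: replicate_add[symmetric] del: replicate_Suc)
    ultimately show ?thesis
      using Suc k id ids by (simp add: face_def unit_gen_def del: replicate_Suc)
  qed
qed

lemma bdry_unit_chain:
  assumes a: "Poly_Mapping.keys a \<subseteq> Ob"
  shows "bdry C (Suc m) (unit_chain (Suc m) a) = frag_cmul (alt_sum (Suc m)) (unit_chain m a)"
proof -
  have "bdry C (Suc m) (unit_chain (Suc m) a) = frag_extend (bdry_gen (Suc m) \<circ> unit_gen (Suc m)) a"
    unfolding bdry_eq unit_chain_def using frag_extend_compose[of "bdry_gen (Suc m)" "unit_gen (Suc m)" a]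
    by (simp add: o_def)
  also have "\<dots> = frag_extend (\<lambda>x. frag_cmul (alt_sum (Suc m)) (frag_of (unit_gen m x))) a"
  proof (rule frag_extend_eq)
    fix x assume "x \<in> Poly_Mapping.keys a"
    then have x: "x \<in> Ob" using a by blast
    have "bdry_gen (Suc m) (unit_gen (Suc m) x)
        = (\<Sum>j\<le>Suc m. frag_cmul ((-1) ^ (Suc m - j)) (frag_of (unit_gen m x)))"
      unfolding bdry_gen_def using face_unit_gen[OF x] by (intro sum.cong) auto
    then show "(bdry_gen (Suc m) \<circ> unit_gen (Suc m)) x = frag_cmul (alt_sum (Suc m)) (frag_of (unit_gen m x))"
      by (simp add: sum_frag_cmul_const alt_sum_def del: sum.atMost_Suc)
  qed
  also have "\<dots> = frag_cmul (alt_sum (Suc m)) (unit_chain m a)"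
    by (simp add: frag_extend_cmul_fun unit_chain_def)
  finally show ?thesis .
qed

subsection \<open>Homology\<close>

text \<open>In degree 0 the boundaries are exactly the kernel of the trace, since d_1 multiplies the trace
  by 1 - 1 = 0.\<close>

lemma boundaries_zero_eq_kernel: "boundaries C 0 = kernel (CG 0) (free_Abelian_group Ob) trace"
proof
  show "boundaries C 0 \<subseteq> kernel (CG 0) (free_Abelian_group Ob) trace"
    unfolding boundaries_def
  proof (rule group.generate_subgroup_incl[OF chain_group_group _ group_hom.subgroup_kernel[OF trace_hom]])
    have "trace (bdry C (Suc 0) d) = 0" if "d \<in> carrier (CG (Suc 0))" for d
      using trace_bdry[OF that] alt_sum_eq[of 1] by simp
    then show "bdry C (Suc 0) ` carrier (CG (Suc 0)) \<union> rels 0 \<subseteq> kernel (CG 0) (free_Abelian_group Ob) trace"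
      using bdry_closed trace_tensor_rels tensor_rels_closed by (auto simp: kernel_def)
  qed
  show "kernel (CG 0) (free_Abelian_group Ob) trace \<subseteq> boundaries C 0"
    using tensor_rels_iff_trace tensor_rels_in_boundaries by (auto simp: kernel_def)
qed

theorem HH_zero_iso: "HH C 0 \<cong> free_Abelian_group Ob"
proof -
  have "HH C 0 = CG 0 Mod kernel (CG 0) (free_Abelian_group Ob) trace"
    unfolding HH_def cycles_def boundaries_zero_eq_kernel[symmetric]
    by (simp add: group.subgroup_generated_group_carrier[OF chain_group_group])
  moreover have "trace ` carrier (CG 0) = carrier (free_Abelian_group Ob)"
  proof
    show "trace ` carrier (CG 0) \<subseteq> carrier (free_Abelian_group Ob)"
      using trace_closed by auto
    show "carrier (free_Abelian_group Ob) \<subseteq> trace ` carrier (CG 0)"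
    proof
      fix a assume "a \<in> carrier (free_Abelian_group Ob)"
      then have a: "Poly_Mapping.keys a \<subseteq> Ob" by simp
      show "a \<in> trace ` carrier (CG 0)"
        using trace_unit_chain[OF a, of 0] unit_chain_closed[OF a, of 0] by (metis image_eqI)
    qed
  qed
  ultimately show ?thesis
    using group_hom.FactGroup_iso[OF trace_hom] by simp
qed

text \<open>In positive degree n, a cycle c differs from the unit chain of its trace by a relation.
  That unit chain is the boundary of the unit chain one degree up if n is odd; if n is even,
  d_n multiplies the trace by 1, so the trace of a cycle is zero.\<close>

lemma cycles_in_boundaries: "cycles C (Suc m) \<subseteq> boundaries C (Suc m)"
proof
  fix c assume "c \<in> cycles C (Suc m)"
  then have c: "c \<in> carrier (CG (Suc m))" and dc: "bdry C (Suc m) c \<in> rels m"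
    by (auto simp: cycles_def)
  have keys: "Poly_Mapping.keys (trace c) \<subseteq> Ob"
    by (rule trace_closed[OF c])
  have unit_boundary: "unit_chain (Suc m) (trace c) \<in> boundaries C (Suc m)"
  proof (cases "even m")
    case True
    have "bdry C (Suc (Suc m)) (unit_chain (Suc (Suc m)) (trace c)) = unit_chain (Suc m) (trace c)"
      using bdry_unit_chain[OF keys, of "Suc m"] alt_sum_eq[of "Suc (Suc m)"] True by simp
    then show ?thesis
      using bdry_in_boundaries[OF unit_chain_closed[OF keys]] by metis
  next
    case False
    have "trace c = 0"
      using trace_tensor_rels[OF dc] trace_bdry[OF c] alt_sum_eq[of "Suc m"] False by simp
    then show ?thesis
      using subgroup.one_closed[OF boundaries_subgroup] by (simp add: chain_group_def unit_chain_def)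
  qed
  have "c = (c - unit_chain (Suc m) (trace c)) + unit_chain (Suc m) (trace c)"
    by simp
  moreover have "c - unit_chain (Suc m) (trace c) \<in> boundaries C (Suc m)"
    using tensor_rels_in_boundaries[OF reduce[OF c]] .
  ultimately show "c \<in> boundaries C (Suc m)"
    using boundaries_add unit_boundary by metis
qed

text \<open>Conversely, boundaries and relations are cycles: d commutes with the trace up to the
  factors alt_sum, whose consecutive products vanish, and relations have trace zero.\<close>

lemma boundaries_in_cycles: "boundaries C (Suc m) \<subseteq> cycles C (Suc m)"
  unfolding boundaries_def
proof (rule group.generate_subgroup_incl[OF chain_group_group Un_least cycles_subgroup])
  have bdry_rel: "bdry C (Suc m) c \<in> rels m" if c: "c \<in> carrier (CG (Suc m))" and tr: "alt_sum (Suc m) = 0 \<or> trace c = 0" for c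
    using tensor_rels_iff_trace[OF bdry_closed[OF c]] trace_bdry[OF c] tr by auto
  show "bdry C (Suc (Suc m)) ` carrier (CG (Suc (Suc m))) \<subseteq> cycles C (Suc m)"
  proof
    fix c assume "c \<in> bdry C (Suc (Suc m)) ` carrier (CG (Suc (Suc m)))"
    then obtain d where d: "d \<in> carrier (CG (Suc (Suc m)))" and cd: "c = bdry C (Suc (Suc m)) d"
      by blast
    have c: "c \<in> carrier (CG (Suc m))"
      using bdry_closed[OF d] cd by simp
    have "alt_sum (Suc m) = 0 \<or> trace c = 0"
      using trace_bdry[OF d] alt_sum_eq[of "Suc m"] alt_sum_eq[of "Suc (Suc m)"] cd by auto
    then show "c \<in> cycles C (Suc m)"
      using bdry_rel[OF c] c by (simp add: cycles_def)
  qed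
  show "rels (Suc m) \<subseteq> cycles C (Suc m)"
    using bdry_rel tensor_rels_closed trace_tensor_rels by (auto simp: cycles_def)
qed

theorem HH_pos_trivial: "trivial_group (HH C (Suc m))"
proof -
  have "carrier (subgroup_generated (CG (Suc m)) (cycles C (Suc m))) = boundaries C (Suc m)"
    using subgroup.carrier_subgroup_generated_subgroup[OF cycles_subgroup] cycles_in_boundaries
      boundaries_in_cycles by blast
  then show ?thesis
    unfolding HH_def
    by (metis trivial_group_Mod_self group.group_subgroup_generated[OF chain_group_group])
qed

end

theorem proposition4p2:
  fixes C :: "('o, 'm) lincat"
  assumes "linear_category C"
    and "strongly_upper_triangular C"
  shows "HH C 0 \<cong> free_Abelian_group (lc_Ob C) \<and> (\<forall>i>0. trivial_group (HH C i))"
proof -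
  interpret sut_cat C
    by (intro sut_cat.intro linear_cat.intro sut_cat_axioms.intro assms)
  show ?thesis
    using HH_zero_iso HH_pos_trivial by (metis gr0_implies_Suc)
qed

end
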